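(* Let $a,b$ be non-negative integers and $c=1$ such that the polynomial $x^3-ax^2-bx-c$ has exactly one real root $\eta_1$, and $\eta_1>1$. Then there exists a real number $U$ such that for any positive integers $n,k$ with $k\ge 4$ and $n\ge U\eta_1^{3k/2}$, there is a positive integer sequence $\langle x_i\rangle_{i=1}^k$ satisfying $x_{i+3}=ax_{i+2}+bx_{i+1}+cx_i$ for $1\le i\le k-3$ and terminating at $x_k=n$.
   Context: A sequence $\langle x_i\rangle_{i=1}^k$ is positive if $x_1,x_2,x_3>0$. *)

theory Defs
  imports Complex_Main
begin

definition positive_seq :: "(nat \<Rightarrow> int) \<Rightarrow> bool" where
  "positive_seq x \<longleftrightarrow> x 1 > 0 \<and> x 2 > 0 \<and> x 3 > 0"

end

theory Submission imports Defs begin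

text \<open>
  Run the recurrence backwards from \<open>x\<^sub>k = n\<close>. The reversed characteristic polynomial
  \<open>t\<^sup>3 + b t\<^sup>2 + a t - 1\<close> has the real root \<open>1/\<eta>\<close>, and since \<open>\<eta>\<close> is the only real root of the
  original cubic, its other two roots are non-real of modulus \<open>\<surd>\<eta>\<close>. So the backward sequence is
  a component decaying like \<open>\<eta>\<^sup>-\<^sup>j\<close> plus an oscillating component whose energy, a positive
  definite quadratic form, grows exactly like \<open>\<eta>\<^sup>j\<close>. Taking the next two terms to be
  \<open>\<lceil>n/\<eta>\<rceil>\<close> and \<open>\<lceil>\<lceil>n/\<eta>\<rceil>/\<eta>\<rceil>\<close> makes the initial oscillation lie in \<open>[0,1)\<close>, so the sequence
  stays positive for \<open>j\<close> steps as long as \<open>n \<eta>\<^sup>-\<^sup>j\<close> dominates \<open>\<eta>\<^sup>j\<^sup>/\<^sup>2\<close>, i.e. for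
  \<open>n \<ge> U \<eta>\<^sup>3\<^sup>j\<^sup>/\<^sup>2\<close>.
\<close>

lemma rec2_quadratic_invariant:
  fixes y :: "nat \<Rightarrow> 'a::comm_ring_1"
  assumes rec: "\<And>j. y (j+2) = - s * y (j+1) - p * y j"
  shows "y (j+1)^2 + s * y j * y (j+1) + p * y j^2
           = p^j * (y 1^2 + s * y 0 * y 1 + p * y 0^2)"
proof (induction j)
  case (Suc j)
  have "y (j+2)^2 + s * y (j+1) * y (j+2) + p * y (j+1)^2
          = p * (y (j+1)^2 + s * y j * y (j+1) + p * y j^2)"
    unfolding rec[of j] by (simp add: algebra_simps power2_eq_square)
  then show ?case using Suc by (simp add: numeral_2_eq_2)
qed simp

lemma quadratic_pos_if_discriminant_neg:
  fixes s p t :: real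
  assumes "s^2 < 4*p"
  shows "t^2 + s*t + p > 0"
proof -
  have "4 * (t^2 + s*t + p) = (2*t + s)^2 + (4*p - s^2)"
    by (simp add: algebra_simps power2_eq_square)
  then show ?thesis using assms by (smt (verit) zero_le_power2)
qed

lemma square_le_quadratic_form:
  fixes s p c u v :: real
  assumes definite: "s^2 < 4*p"
  shows "(u + c*v)^2 \<le> 8*(p + c^2)/(4*p - s^2) * (u^2 + s*v*u + p*v^2)"
proof -
  define D where "D = 4*p - s^2"
  define Q where "Q = u^2 + s*v*u + p*v^2"
  have D: "D > 0" using definite by (simp add: D_def)
  have v_bound: "D * v^2 \<le> 4 * Q"
  proof -
    have "4 * Q - D * v^2 = (2*u + s*v)^2"
      by (simp add: Q_def D_def algebra_simps power2_eq_square)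
    then show ?thesis by (metis diff_ge_0_iff_ge zero_le_power2)
  qed
  have u_bound: "D * u^2 \<le> 4 * p * Q"
  proof -
    have "4 * p * Q - D * u^2 = (2*p*v + s*u)^2"
      by (simp add: Q_def D_def algebra_simps power2_eq_square)
    then show ?thesis by (metis diff_ge_0_iff_ge zero_le_power2)
  qed
  have "(u + c*v)^2 \<le> 2 * u^2 + 2 * c^2 * v^2"
    using sum_squares_ge_zero[of "u - c*v" 0] by (simp add: algebra_simps power2_eq_square)
  also have "\<dots> = (2 * (D * u^2) + 2 * c^2 * (D * v^2)) / D"
    using D by (simp add: field_simps)
  also have "\<dots> \<le> (2 * (4 * p * Q) + 2 * c^2 * (4 * Q)) / D"
    using u_bound v_bound D by (intro divide_right_mono add_mono mult_left_mono) auto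
  also have "\<dots> = 8*(p + c^2)/D * Q" by (simp add: field_simps)
  finally show ?thesis by (simp add: D_def Q_def)
qed

lemma cubic_unique_real_root_discriminant:
  fixes a b \<eta> :: real
  assumes root: "\<eta>^3 - a*\<eta>^2 - b*\<eta> - 1 = 0"
    and unique: "\<And>x. x^3 - a*x^2 - b*x - 1 = 0 \<Longrightarrow> x = \<eta>"
    and not_one: "\<eta> \<noteq> 1"
  shows "(b + 1/\<eta>)^2 < 4*\<eta>"
proof -
  have nonzero: "\<eta> \<noteq> 0" using root by auto
  define p where "p = \<eta> - a"
  have factor: "x^3 - a*x^2 - b*x - 1 = (x - \<eta>) * (x^2 + p*x + 1/\<eta>)" for x
  proof -
    have "(x - \<eta>) * (x^2 + p*x + 1/\<eta>)
            = x^3 - a*x^2 - b*x - 1 - x * (\<eta>^3 - a*\<eta>^2 - b*\<eta> - 1) / \<eta>"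
      using nonzero by (simp add: p_def field_simps power2_eq_square power3_eq_cube)
    then show ?thesis using root by simp
  qed
  have "p^2 < 4/\<eta>"
  proof (rule ccontr)
    assume "\<not> p^2 < 4/\<eta>"
    then obtain d where d: "d^2 = p^2 - 4/\<eta>" by (metis real_sqrt_pow2 linorder_not_less diff_ge_0_iff_ge)
    have quadratic_root_eq: "r = \<eta>" if "r^2 + p*r + 1/\<eta> = 0" for r
      using unique factor[of r] that by simp
    have "((-p + d)/2)^2 + p*((-p + d)/2) + 1/\<eta> = 0" "((-p - d)/2)^2 + p*((-p - d)/2) + 1/\<eta> = 0"
      using d by (simp_all add: field_simps power2_eq_square)
    then have "(-p + d)/2 = \<eta>" "(-p - d)/2 = \<eta>" by (metis quadratic_root_eq)+
    moreover have "((-p + d)/2) * ((-p - d)/2) = 1/\<eta>"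
      using d by (simp add: field_simps power2_eq_square)
    ultimately have "\<eta> * \<eta> = 1/\<eta>" by simp
    then have "\<eta>^3 = 1" using nonzero by (simp add: field_simps power3_eq_cube)
    then have "\<bar>\<eta>\<bar> = 1" using power_eq_1_iff[of \<eta> 3] by simp
    moreover have "\<eta> \<noteq> -1" using \<open>\<eta>^3 = 1\<close> by auto
    ultimately show False using not_one by linarith
  qed
  then have "\<eta>^2 * p^2 < \<eta>^2 * (4/\<eta>)" using nonzero by (intro mult_strict_left_mono) auto
  moreover have "\<eta> * p = b + 1/\<eta>"
  proof -
    have "\<eta> * (\<eta> * p) = b*\<eta> + 1"
      using root by (simp add: p_def algebra_simps power2_eq_square power3_eq_cube)
    then show ?thesis using nonzero by (simp add: field_simps power2_eq_square)
  qed
  then have "\<eta>^2 * p^2 = (b + 1/\<eta>)^2" by (metis power_mult_distrib)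
  ultimately show ?thesis using nonzero by (simp add: power2_eq_square)
qed

lemma powr_half_squared:
  fixes x :: real
  assumes "x > 0"
  shows "(x powr (real m / 2))^2 = x^m"
  using assms by (simp add: powr_power powr_realpow)

text \<open>\<open>1 + s + \<eta>\<close> bounds the initial energy, the fraction is the constant of
  square_le_quadratic_form.\<close>
definition positivity_threshold :: "real \<Rightarrow> real \<Rightarrow> real" where
  "positivity_threshold \<eta> s = 8*(\<eta> + (1/\<eta> + s)^2)/(4*\<eta> - s^2) * (1 + s + \<eta>) + 1"

text \<open>The characteristic polynomial of the recurrence is \<open>(t - 1/\<eta>) (t\<^sup>2 + s t + \<eta>)\<close>;
  \<open>dominant\<close> applies the quadratic factor to \<open>w\<close>, \<open>oscillation\<close> the linear one.\<close>
locale reversed_recurrence =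
  fixes \<eta> s :: real and w :: "nat \<Rightarrow> real"
  assumes eta_nonzero: "\<eta> \<noteq> 0"
    and recurrence: "\<And>j. w (j+3) + (s - 1/\<eta>) * w (j+2) + (\<eta> - s/\<eta>) * w (j+1) - w j = 0"
begin

definition dominant :: "nat \<Rightarrow> real" where
  "dominant j = w (j+2) + s * w (j+1) + \<eta> * w j"

definition oscillation :: "nat \<Rightarrow> real" where
  "oscillation j = w (j+1) - w j / \<eta>"

definition energy :: "nat \<Rightarrow> real" where
  "energy j = oscillation (j+1)^2 + s * oscillation j * oscillation (j+1) + \<eta> * oscillation j^2"

lemma dominant_Suc: "dominant (Suc j) = dominant j / \<eta>"
proof -
  have "\<eta> * dominant (Suc j) - dominant j
          = \<eta> * (w (j+3) + (s - 1/\<eta>) * w (j+2) + (\<eta> - s/\<eta>) * w (j+1) - w j)"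
    using eta_nonzero by (simp add: dominant_def field_simps numeral_eq_Suc)
  also have "\<dots> = 0" using recurrence[of j] by simp
  finally show ?thesis using eta_nonzero by (simp add: field_simps)
qed

lemma dominant_eq: "dominant j = dominant 0 / \<eta>^j"
  by (induction j) (simp_all add: dominant_Suc)

lemma oscillation_rec: "oscillation (j+2) = - s * oscillation (j+1) - \<eta> * oscillation j"
proof -
  have "oscillation (j+2) + s * oscillation (j+1) + \<eta> * oscillation j
          = w (j+3) + (s - 1/\<eta>) * w (j+2) + (\<eta> - s/\<eta>) * w (j+1) - w j"
    using eta_nonzero by (simp add: oscillation_def field_simps numeral_eq_Suc)
  then show ?thesis using recurrence[of j] by simp
qed

lemma energy_eq: "energy j = \<eta>^j * energy 0"
  using rec2_quadratic_invariant[of oscillation s \<eta> j] oscillation_rec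
  by (simp add: energy_def)

lemma w_decompose:
  "((1/\<eta>)^2 + s * (1/\<eta>) + \<eta>) * w j
     = dominant j - oscillation (j+1) - (1/\<eta> + s) * oscillation j"
  using eta_nonzero
  by (simp add: dominant_def oscillation_def field_simps power2_eq_square numeral_eq_Suc)

lemma w_pos_if_dominant:
  assumes definite: "s^2 < 4*\<eta>" and "dominant j > 0"
    and "8*(\<eta> + (1/\<eta> + s)^2)/(4*\<eta> - s^2) * energy j < dominant j^2"
  shows "w j > 0"
proof -
  have "(oscillation (j+1) + (1/\<eta> + s) * oscillation j)^2 < dominant j^2"
    using square_le_quadratic_form[OF definite, of "oscillation (j+1)" "1/\<eta> + s" "oscillation j"] assms(3)
    by (simp add: energy_def)
  then have "oscillation (j+1) + (1/\<eta> + s) * oscillation j < dominant j"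
    using \<open>dominant j > 0\<close> by (simp add: power2_less_imp_less)
  then have "((1/\<eta>)^2 + s * (1/\<eta>) + \<eta>) * w j > 0" using w_decompose by simp
  moreover have "(1/\<eta>)^2 + s * (1/\<eta>) + \<eta> > 0" using quadratic_pos_if_discriminant_neg[OF definite] .
  ultimately show ?thesis by (simp add: zero_less_mult_iff)
qed

lemma energy_start_le:
  assumes "s \<ge> 0" "\<eta> \<ge> 0" "\<bar>oscillation 0\<bar> \<le> 1" "\<bar>oscillation 1\<bar> \<le> 1"
  shows "energy 0 \<le> 1 + s + \<eta>"
proof -
  have "oscillation 1^2 \<le> 1" "oscillation 0^2 \<le> 1" "\<bar>oscillation 0 * oscillation 1\<bar> \<le> 1"
    using assms by (simp_all add: abs_square_le_1 abs_mult mult_le_one)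
  then have "s * (oscillation 0 * oscillation 1) \<le> s" "\<eta> * oscillation 0^2 \<le> \<eta>"
    using assms(1,2) by (auto intro: mult_left_le simp: abs_le_iff)
  with \<open>oscillation 1^2 \<le> 1\<close> show ?thesis by (simp add: energy_def mult.assoc)
qed

lemma dominant_start_ge:
  assumes "\<eta> \<ge> 1" "s \<ge> 0" "w 0 > 0" "oscillation 0 \<ge> 0" "oscillation 1 \<ge> 0"
  shows "dominant 0 \<ge> w 0"
proof -
  have "w 1 \<ge> w 0 / \<eta>" "w 2 \<ge> w 1 / \<eta>"
    using assms(4,5) by (simp_all add: oscillation_def numeral_2_eq_2)
  then have "w 1 > 0" "w 2 > 0" using assms(1,3) by (smt (verit) divide_pos_pos)+
  moreover have "w 0 \<le> \<eta> * w 0" using mult_right_mono[of 1 \<eta> "w 0"] assms(1,3) by simp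
  moreover have "s * w 1 \<ge> 0" using assms(2) \<open>w 1 > 0\<close> by simp
  ultimately show ?thesis by (simp add: dominant_def numeral_2_eq_2)
qed

lemma dominant_sq_ge:
  assumes gt1: "\<eta> > 1" and "j \<le> k" and "C \<ge> 0" and start: "C * \<eta>^(3*k) \<le> dominant 0^2"
  shows "C * \<eta>^j \<le> dominant j^2"
proof -
  have "(C * \<eta>^j) * (\<eta>^j)^2 = C * \<eta>^(3*j)"
    by (simp add: power_mult_distrib mult.assoc flip: power_add power_mult)
  also have "\<dots> \<le> C * \<eta>^(3*k)"
    using gt1 \<open>j \<le> k\<close> \<open>C \<ge> 0\<close> by (intro mult_left_mono power_increasing) auto
  also have "\<dots> \<le> dominant 0^2" by (rule start)
  also have "\<dots> = dominant j^2 * (\<eta>^j)^2"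
    using dominant_eq[of j] gt1 by (simp add: power_divide)
  finally show ?thesis using gt1 by simp
qed

lemma w_pos_from_small_oscillation:
  assumes gt1: "\<eta> > 1" and s: "s > 0" and definite: "s^2 < 4*\<eta>" and "w 0 > 0"
    and osc0: "0 \<le> oscillation 0" "oscillation 0 < 1"
    and osc1: "0 \<le> oscillation 1" "oscillation 1 < 1"
    and large: "positivity_threshold \<eta> s * \<eta> powr (3 * real k / 2) \<le> w 0"
    and "j \<le> k"
  shows "w j > 0"
proof -
  define E where "E = 8*(\<eta> + (1/\<eta> + s)^2)/(4*\<eta> - s^2)"
  define U where "U = positivity_threshold \<eta> s"
  have E: "E \<ge> 0" using definite gt1 by (simp add: E_def)
  have U: "U = E * (1 + s + \<eta>) + 1" by (simp add: U_def E_def positivity_threshold_def)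
  have dominant0: "dominant 0 \<ge> w 0"
    using dominant_start_ge gt1 s \<open>w 0 > 0\<close> osc0 osc1 by simp
  have "U^2 * \<eta>^(3*k) \<le> w 0^2"
  proof -
    have "0 \<le> U * \<eta> powr (real (3*k) / 2)" using U E s gt1 by simp
    moreover have "U * \<eta> powr (real (3*k) / 2) \<le> w 0" using large by (simp add: U_def)
    ultimately have "(U * \<eta> powr (real (3*k) / 2))^2 \<le> w 0^2" by (simp add: power_mono)
    then show ?thesis using gt1 powr_half_squared[of \<eta> "3*k"] by (simp add: power_mult_distrib)
  qed
  also have "\<dots> \<le> dominant 0^2" using dominant0 \<open>w 0 > 0\<close> by (simp add: power_mono)
  finally have dominant_j: "U^2 * \<eta>^j \<le> dominant j^2"
    using dominant_sq_ge gt1 \<open>j \<le> k\<close> by simp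
  have "energy 0 \<le> 1 + s + \<eta>" using energy_start_le s gt1 osc0 osc1 by simp
  then have "E * energy j \<le> E * (\<eta>^j * (1 + s + \<eta>))"
    unfolding energy_eq[of j] using E gt1 by (intro mult_left_mono) auto
  also have "\<dots> = (E * (1 + s + \<eta>)) * \<eta>^j" by (simp add: algebra_simps)
  also have "\<dots> < U^2 * \<eta>^j"
  proof (rule mult_strict_right_mono)
    have "U \<ge> 1" using U E s gt1 by simp
    then have "U \<le> U^2" by (simp add: power2_eq_square)
    then show "E * (1 + s + \<eta>) < U^2" using U by simp
  qed (use gt1 in simp)
  finally have "E * energy j < dominant j^2" using dominant_j by linarith
  moreover have "dominant j > 0" using dominant_eq[of j] dominant0 \<open>w 0 > 0\<close> gt1 by simp
  ultimately show ?thesis using w_pos_if_dominant definite by (simp add: E_def)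
qed

end

fun backward_seq :: "int \<Rightarrow> int \<Rightarrow> int \<Rightarrow> int \<Rightarrow> int \<Rightarrow> nat \<Rightarrow> int" where
  "backward_seq a b u v w 0 = u"
| "backward_seq a b u v w (Suc 0) = v"
| "backward_seq a b u v w (Suc (Suc 0)) = w"
| "backward_seq a b u v w (Suc (Suc (Suc j)))
     = backward_seq a b u v w j - a * backward_seq a b u v w (Suc j)
       - b * backward_seq a b u v w (Suc (Suc j))"

lemma backward_seq_reversed:
  assumes "i + 3 \<le> k"
  shows "backward_seq a b u v w (k - (i+3))
           = a * backward_seq a b u v w (k - (i+2)) + b * backward_seq a b u v w (k - (i+1))
             + backward_seq a b u v w (k - i)"
proof -
  define j where "j = k - (i+3)"
  have "k - (i+3) = j" "k - (i+2) = Suc j" "k - (i+1) = Suc (Suc j)" "k - i = Suc (Suc (Suc j))"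
    using assms by (auto simp: j_def)
  then show ?thesis by simp
qed

lemma backward_seq_ceiling_start_pos:
  fixes a b n k j :: nat and \<eta> :: real
  assumes root: "\<eta>^3 - a*\<eta>^2 - b*\<eta> - 1 = 0" and gt1: "\<eta> > 1"
    and definite: "(b + 1/\<eta>)^2 < 4*\<eta>" and "n > 0"
    and large: "positivity_threshold \<eta> (b + 1/\<eta>) * \<eta> powr (3 * real k / 2) \<le> n"
    and "j \<le> k"
  shows "backward_seq a b n \<lceil>n/\<eta>\<rceil> \<lceil>\<lceil>n/\<eta>\<rceil>/\<eta>\<rceil> j > 0"
proof -
  define W where "W i = real_of_int (backward_seq a b n \<lceil>n/\<eta>\<rceil> \<lceil>\<lceil>n/\<eta>\<rceil>/\<eta>\<rceil> i)" for i
  have a_eq: "\<eta> - (b + 1/\<eta>)/\<eta> = a"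
  proof -
    have "\<eta>^2 * (\<eta> - (b + 1/\<eta>)/\<eta>) = \<eta>^2 * a"
      using root gt1 by (simp add: field_simps power2_eq_square power3_eq_cube)
    then show ?thesis using gt1 by simp
  qed
  interpret reversed_recurrence \<eta> "b + 1/\<eta>" W
  proof
    fix j
    show "W (j+3) + (b + 1/\<eta> - 1/\<eta>) * W (j+2) + (\<eta> - (b + 1/\<eta>)/\<eta>) * W (j+1) - W j = 0"
      unfolding a_eq by (simp add: W_def numeral_eq_Suc)
  qed (use gt1 in simp)
  have "0 \<le> oscillation 0" "oscillation 0 < 1" "0 \<le> oscillation 1" "oscillation 1 < 1"
    unfolding oscillation_def W_def using ceiling_correct
    by (simp_all add: numeral_2_eq_2 algebra_simps) (smt (verit) ceiling_correct)+
  moreover have "b + 1/\<eta> > 0" using gt1 by (simp add: add_nonneg_pos)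
  ultimately have "W j > 0"
    using w_pos_from_small_oscillation gt1 definite \<open>n > 0\<close> large \<open>j \<le> k\<close> by (simp add: W_def)
  then show ?thesis by (simp add: W_def)
qed

theorem theorem7:
  fixes a b c :: nat and \<eta> :: real
  assumes c1: "c = 1"
    and one_root: "{x::real. x^3 - real a * x^2 - real b * x - real c = 0} = {\<eta>}"
    and gt1: "\<eta> > 1"
  shows "\<exists>U::real. \<forall>n k :: nat. n > 0 \<longrightarrow> k \<ge> 4 \<longrightarrow>
           real n \<ge> U * \<eta> powr (3 * real k / 2) \<longrightarrow>
           (\<exists>x :: nat \<Rightarrow> int. positive_seq x \<and>
              (\<forall>i. 1 \<le> i \<and> i \<le> k - 3 \<longrightarrow>
                  x (i + 3) = int a * x (i + 2) + int b * x (i + 1) + int c * x i) \<and>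
              x k = int n)"
proof -
  have root: "\<eta>^3 - a*\<eta>^2 - b*\<eta> - 1 = 0" using one_root c1 by auto
  have definite: "(b + 1/\<eta>)^2 < 4*\<eta>"
    using cubic_unique_real_root_discriminant[OF root] one_root c1 gt1 by auto
  show ?thesis
  proof (intro exI[of _ "positivity_threshold \<eta> (b + 1/\<eta>)"] allI impI)
    fix n k :: nat
    assume "n > 0" "k \<ge> 4"
      and large: "real n \<ge> positivity_threshold \<eta> (b + 1/\<eta>) * \<eta> powr (3 * real k / 2)"
    define x where "x i = backward_seq a b n \<lceil>n/\<eta>\<rceil> \<lceil>\<lceil>n/\<eta>\<rceil>/\<eta>\<rceil> (k - i)" for i
    have pos: "x i > 0" for i
      using backward_seq_ceiling_start_pos[OF root gt1 definite \<open>n > 0\<close> large] by (simp add: x_def)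
    have "positive_seq x" using pos by (simp add: positive_seq_def)
    moreover have "x (i + 3) = int a * x (i + 2) + int b * x (i + 1) + int c * x i"
      if "1 \<le> i \<and> i \<le> k - 3" for i
    proof -
      have "i + 3 \<le> k" using that \<open>k \<ge> 4\<close> by linarith
      then show ?thesis using backward_seq_reversed c1 by (simp add: x_def)
    qed
    moreover have "x k = int n" by (simp add: x_def)
    ultimately show "\<exists>x. positive_seq x \<and>
        (\<forall>i. 1 \<le> i \<and> i \<le> k - 3 \<longrightarrow> x (i + 3) = int a * x (i + 2) + int b * x (i + 1) + int c * x i) \<and>
        x k = int n" by blast
  qed
qed

end
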